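(* Let $\psi(\theta;y,x)\in\mathbb R^q$, $\theta\in\Theta\subseteq\mathbb R^q$, and let $\theta(\cdot)$ be the EE functional defined by $E_P[\psi(\theta(P);Y,X)]=0$. Suppose $\mathcal P$ is a class of joint distributions of $(Y,X)$ such that for every $P\in\mathcal P$, with $\hat\theta_N=\theta(\hat P_N)$ the plug-in estimate from $N$ iid draws, $N^{1/2}(\hat\theta_N-\theta(P))\to\mathcal N\big(0,\Lambda_P^{-1}\,V_P[\psi(\theta(P);Y,X)]\,(\Lambda_P^{-1})^{T}\big)$ in distribution, where $\Lambda_P=\nabla_\theta E_P[\psi(\theta;Y,X)]\big|_{\theta=\theta(P)}$ is invertible and $V_P$ denotes the covariance matrix under $P$. Let a fixed dataset of size $N$ have empirical distribution $\hat P_N\in\mathcal P$, and let $\theta^*_M=\theta(P^*_M)$ where $P^*_M$ is the empirical distribution of $M$ iid draws from $\hat P_N$. Then, with $N$ and the data fixed, $M^{1/2}(\theta^*_M-\theta(\hat P_N))$ converges in distribution as $M\to\infty$ to a normal distribution with mean $0$ whose covariance equals the plug-in sandwich estimator $\Lambda_{\hat P_N}^{-1}\,V_{\hat P_N}[\psi(\hat\theta_N;Y,X)]\,(\Lambda_{\hat P_N}^{-1})^{T}$, $\hat\theta_N=\theta(\hat P_N)$.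
   Context: An estimating-equation (EE) functional assigns to a joint distribution $P$ of $(Y,X)$ the solution $\theta(P)$ of $E_P[\psi(\theta;Y,X)]=0$, assumed unique. The $M$-of-$N$ bootstrap resamples $M$ cases iid from the empirical distribution of the $N$ observed cases $(y_i,x_i)$. *)

theory Defs
  imports "HOL-Probability.Probability"
begin

text \<open>The EE functional: the (assumed unique) root in Theta of E_P[psi(theta;Y,X)] = 0.\<close>
definition EE_theta :: "(real^'q \<Rightarrow> 'a \<Rightarrow> real^'q) \<Rightarrow> (real^'q) set \<Rightarrow> 'a measure \<Rightarrow> real^'q" where
  "EE_theta psi Theta P =
     (THE th. th \<in> Theta \<and> integrable P (psi th) \<and> (\<integral>z. psi th z \<partial>P) = 0)"

definition EE_Lambda :: "(real^'q \<Rightarrow> 'a \<Rightarrow> real^'q) \<Rightarrow> (real^'q) set \<Rightarrow> 'a measure \<Rightarrow> real^'q^'q" where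
  "EE_Lambda psi Theta P = jacobian (\<lambda>th. \<integral>z. psi th z \<partial>P) (at (EE_theta psi Theta P))"

definition cov_matrix :: "'a measure \<Rightarrow> ('a \<Rightarrow> real^'q) \<Rightarrow> real^'q^'q" where
  "cov_matrix P f = (\<chi> i j. \<integral>z. (f z $ i - (\<integral>w. f w \<partial>P) $ i) * (f z $ j - (\<integral>w. f w \<partial>P) $ j) \<partial>P)"

definition sandwich :: "(real^'q \<Rightarrow> 'a \<Rightarrow> real^'q) \<Rightarrow> (real^'q) set \<Rightarrow> 'a measure \<Rightarrow> real^'q^'q" where
  "sandwich psi Theta P =
     matrix_inv (EE_Lambda psi Theta P)
       ** cov_matrix P (psi (EE_theta psi Theta P))
       ** transpose (matrix_inv (EE_Lambda psi Theta P))"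

definition empirical :: "nat \<Rightarrow> (nat \<Rightarrow> 'a::topological_space) \<Rightarrow> 'a measure" where
  "empirical n omega = distr (uniform_count_measure {..<n}) borel omega"

definition plugin_law :: "(real^'q \<Rightarrow> 'a::topological_space \<Rightarrow> real^'q) \<Rightarrow> (real^'q) set
     \<Rightarrow> 'a measure \<Rightarrow> nat \<Rightarrow> (real^'q) measure" where
  "plugin_law psi Theta P n =
     distr (PiM {..<n} (\<lambda>_. P)) borel
       (\<lambda>omega. sqrt (real n) *\<^sub>R (EE_theta psi Theta (empirical n omega) - EE_theta psi Theta P))"

definition weak_conv_vec :: "(nat \<Rightarrow> (real^'q) measure) \<Rightarrow> (real^'q) measure \<Rightarrow> bool" where
  "weak_conv_vec mus mu \<longleftrightarrow>
     (\<forall>f :: real^'q \<Rightarrow> real. continuous_on UNIV f \<and> bounded (range f) \<longrightarrow>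
        (\<lambda>n. \<integral>x. f x \<partial>mus n) \<longlonglongrightarrow> (\<integral>x. f x \<partial>mu))"

text \<open>mu is the (possibly degenerate) normal distribution N(0, S) on R^q,
  defined via its characteristic function.\<close>
definition mvnormal0 :: "(real^'q) measure \<Rightarrow> real^'q^'q \<Rightarrow> bool" where
  "mvnormal0 mu S \<longleftrightarrow> prob_space mu \<and> sets mu = sets borel \<and>
     (\<forall>t. (\<integral>z. cis (t \<bullet> z) \<partial>mu) = complex_of_real (exp (- (t \<bullet> (S *v t)) / 2)))"

end

theory Submission
  imports Defs
begin

theorem corollary6:
  fixes psi :: "real^'q \<Rightarrow> 'a::topological_space \<Rightarrow> real^'q"
    and Theta :: "(real^'q) set"
    and PP :: "'a measure set"
    and N :: nat
    and x :: "nat \<Rightarrow> 'a"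
  assumes PP_prob: "\<forall>P\<in>PP. prob_space P \<and> sets P = sets borel"
    and unique_root: "\<forall>P\<in>PP. \<exists>!th. th \<in> Theta \<and> integrable P (psi th) \<and> (\<integral>z. psi th z \<partial>P) = 0"
    and Lambda_inv: "\<forall>P\<in>PP. (\<lambda>th. \<integral>z. psi th z \<partial>P) differentiable (at (EE_theta psi Theta P))
                       \<and> invertible (EE_Lambda psi Theta P)"
    and asym_normal: "\<forall>P\<in>PP. \<exists>mu. mvnormal0 mu (sandwich psi Theta P)
                       \<and> weak_conv_vec (plugin_law psi Theta P) mu"
    and N_pos: "0 < N"
    and data_in: "empirical N x \<in> PP"
  shows "\<exists>mu. mvnormal0 mu (sandwich psi Theta (empirical N x))
           \<and> weak_conv_vec (plugin_law psi Theta (empirical N x)) mu"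
  \<comment> \<open>The M-of-N bootstrap law is the plug-in law of the EE functional under the
      population \<open>empirical N x\<close>, so the assumed asymptotic normality applies to it directly.\<close>
  using asym_normal[rule_format, OF data_in] .

end
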